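(* For every finite set $A$ of lines in $\mathbb{R}^2$ there exists a point $q\in\mathbb{R}^2$ such that for every closed halfplane $h$ containing $q$ there is a set $A'\subseteq A$ with $|A'|\ge\sqrt{|A|/3}$ and $V(A')\subseteq h$.
   Context: For a finite set $A$ of lines in $\mathbb{R}^2$, $V(A)$ denotes the set of all intersection points of pairs of lines of $A$. *)

theory Defs
  imports Complex_Main
begin

definition is_line :: "(real \<times> real) set \<Rightarrow> bool" where
  "is_line L \<longleftrightarrow> (\<exists>a b c. (a, b) \<noteq> (0, 0) \<and> L = {(x, y). a * x + b * y = c})"

definition is_closed_halfplane :: "(real \<times> real) set \<Rightarrow> bool" where
  "is_closed_halfplane H \<longleftrightarrow> (\<exists>a b c. (a, b) \<noteq> (0, 0) \<and> H = {(x, y). a * x + b * y \<le> c})"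

definition vertices :: "(real \<times> real) set set \<Rightarrow> (real \<times> real) set" where
  "vertices A = {p. \<exists>L1\<in>A. \<exists>L2\<in>A. L1 \<noteq> L2 \<and> p \<in> L1 \<and> p \<in> L2}"

end

theory Submission
  imports Defs "HOL-Analysis.Analysis"
begin

text \<open>Call a closed halfplane \<open>H\<close> rich if it contains all vertices of
  some subarrangement of at least \<open>\<surd>(|A|/3)\<close> lines.  We show that no three
  non-rich halfplanes cover the vertex set \<open>V(A)\<close>; then the convex hulls of
  \<open>V(A) - H\<close> over non-rich \<open>H\<close> meet three at a time, and Helly's theorem gives
  a point \<open>q\<close> in all of them, which no non-rich halfplane can contain.

  The covering statement rests on two facts.  (1) For a halfplane \<open>H\<close> the lines
  can be mapped into the plane with the product order so that the vertex of two
  lines lies in \<open>H\<close> iff their images are comparable.  (2) By Mirsky's theorem a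
  set of \<open>l\<^sup>2\<close> elements of a partial order has a chain or antichain of size \<open>l\<close>.
  Restricted to one line, three covering halfplanes reduce to two, and one pair
  serves a third of all lines; (1) and (2) then give a rich halfplane.\<close>

lemma is_line_hyperplane: "is_line L \<longleftrightarrow> (\<exists>w r. w \<noteq> 0 \<and> L = {z. inner w z = r})"
proof -
  have "{(x, y). a * x + b * y = c} = {z. inner (a, b) z = c}" for a b c :: real
    by auto
  then show ?thesis
    unfolding is_line_def zero_prod_def by (metis surj_pair)
qed

lemma is_closed_halfplane_inner:
  "is_closed_halfplane H \<longleftrightarrow> (\<exists>w c. w \<noteq> 0 \<and> H = {z. inner w z \<le> c})"
proof -
  have "{(x, y). a * x + b * y \<le> c} = {z. inner (a, b) z \<le> c}" for a b c :: real
    by auto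
  then show ?thesis
    unfolding is_closed_halfplane_def zero_prod_def by (metis surj_pair)
qed

lemma line_affine_dim:
  assumes "is_line L"
  shows "affine L" "aff_dim L = 1"
  using assms by (auto simp: is_line_hyperplane affine_hyperplane)

text \<open>Two distinct lines meet in at most one point: two common points would span
  an affine line equal to both of them.\<close>

lemma lines_meet_at_most_once:
  assumes "is_line L1" "is_line L2" "L1 \<noteq> L2" "P \<in> L1" "P \<in> L2" "Q \<in> L1" "Q \<in> L2"
  shows "P = Q"
proof (rule ccontr)
  assume "P \<noteq> Q"
  have "affine hull {P, Q} = L" if "is_line L" "P \<in> L" "Q \<in> L" for L
  proof (rule affine_dim_equal)
    show "affine hull {P, Q} \<subseteq> L"
      using that line_affine_dim(1)[OF that(1)] by (simp add: hull_minimal)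
    show "aff_dim (affine hull {P, Q}) = aff_dim L"
      using \<open>P \<noteq> Q\<close> line_affine_dim(2)[OF that(1)] by simp
  qed (use line_affine_dim(1)[OF that(1)] in auto)
  then have "L1 = L2"
    using assms(1,2,4-7) by metis
  then show False
    using assms(3) by simp
qed

lemma finite_vertices:
  assumes "finite A" "\<forall>L\<in>A. is_line L"
  shows "finite (vertices A)"
proof -
  have "vertices A = (\<Union>(L1, L2)\<in>{(L1, L2)\<in>A \<times> A. L1 \<noteq> L2}. L1 \<inter> L2)"
    unfolding vertices_def by blast
  moreover have "finite (L1 \<inter> L2)" if "L1 \<in> A" "L2 \<in> A" "L1 \<noteq> L2" for L1 L2
  proof (cases "L1 \<inter> L2 = {}")
    case False
    then obtain P where "P \<in> L1 \<inter> L2" by blast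
    then have "L1 \<inter> L2 \<subseteq> {P}"
      using lines_meet_at_most_once assms(2) that by blast
    then show ?thesis
      using finite_subset by blast
  qed simp
  moreover have "finite {(L1, L2)\<in>A \<times> A. L1 \<noteq> L2}"
    by (rule finite_subset[of _ "A \<times> A"]) (use assms(1) in auto)
  ultimately show ?thesis
    by (auto intro!: finite_UN_I)
qed

lemma vertices_mono: "A \<subseteq> B \<Longrightarrow> vertices A \<subseteq> vertices B"
  unfolding vertices_def by blast

text \<open>Distinct lines through a common point are not parallel: otherwise the
  common direction vector would move the point along both lines.\<close>

lemma meeting_lines_det:
  fixes p1 q1 p2 q2 r1 r2 :: real
  assumes "(p1, q1) \<noteq> 0" "(p2, q2) \<noteq> 0"
    and "L1 = {z. inner (p1, q1) z = r1}" "L2 = {z. inner (p2, q2) z = r2}"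
    and "L1 \<noteq> L2" "P \<in> L1" "P \<in> L2"
  shows "p1 * q2 - p2 * q1 \<noteq> 0"
proof
  assume det: "p1 * q2 - p2 * q1 = 0"
  define d where "d = (- q1, p1)"
  have "d \<noteq> 0"
    using assms(1) by (auto simp: d_def zero_prod_def)
  have "inner (p1, q1) d = 0" "inner (p2, q2) d = 0"
    using det by (auto simp: d_def algebra_simps)
  then have "P + d \<in> L1" "P + d \<in> L2"
    using assms(3-7) by (auto simp: inner_add_right)
  moreover have "is_line L1" "is_line L2"
    using assms(1-4) is_line_hyperplane by blast+
  ultimately have "P + d = P"
    using lines_meet_at_most_once assms(5-7) by blast
  then show False
    using \<open>d \<noteq> 0\<close> by simp
qed

lemma convex_halfplane_complement:
  assumes "is_closed_halfplane H"
  shows "convex (- H)"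
proof -
  obtain w c where "H = {z. inner w z \<le> c}"
    using assms is_closed_halfplane_inner by blast
  then have "- H = {z. inner w z > c}"
    by auto
  then show ?thesis
    by (simp add: convex_halfspace_gt)
qed

lemma collinear_on_line:
  assumes "is_line L" "S \<subseteq> L"
  shows "collinear S"
  using assms(2) collinear_subset collinear_aff_dim line_affine_dim(2)[OF assms(1)]
  by (metis order.refl)

text \<open>For the halfplane
  \<open>a x + b y \<le> c\<close> use the rotated coordinates \<open>u = a x + b y\<close>, \<open>v = a y - b x\<close>;
  the line \<open>p x + q y = r\<close> becomes \<open>s u + g v = r (a\<^sup>2 + b\<^sup>2)\<close> with \<open>(g, s, t)\<close> as
  below.  If \<open>g \<noteq> 0\<close> the line is the graph of a function of \<open>u\<close>; then \<open>s / g\<close> is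
  minus its slope and \<open>t / g\<close> is minus its \<open>v\<close>-value on the boundary \<open>u = c\<close>.
  If \<open>g = 0\<close> the line is parallel to the boundary.\<close>

definition sweep_coords :: "real \<times> real \<times> real \<Rightarrow> real \<times> real \<times> real \<Rightarrow> real \<times> real \<times> real" where
  "sweep_coords = (\<lambda>(a, b, c) (p, q, r).
     (a * q - b * p, a * p + b * q, c * (a * p + b * q) - r * (a * a + b * b)))"

text \<open>The side of the boundary on which two lines meet is read off from their
  coordinates: the signed distance of the meeting point times a nonzero
  determinant is a polynomial expression in the coordinates.\<close>

lemma vertex_side_identity:
  fixes a b c p1 q1 r1 p2 q2 r2 x y :: real
  assumes "p1 * x + q1 * y = r1" "p2 * x + q2 * y = r2"
    and "sweep_coords (a, b, c) (p1, q1, r1) = (g1, s1, t1)"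
    and "sweep_coords (a, b, c) (p2, q2, r2) = (g2, s2, t2)"
  shows "(a * x + b * y - c) * (s1 * g2 - g1 * s2) = - (t1 * g2 - g1 * t2)"
    and "s1 * g2 - g1 * s2 = (a * a + b * b) * (p1 * q2 - p2 * q1)"
proof -
  have coords: "g1 = a * q1 - b * p1" "s1 = a * p1 + b * q1"
    "t1 = c * (a * p1 + b * q1) - (p1 * x + q1 * y) * (a * a + b * b)"
    "g2 = a * q2 - b * p2" "s2 = a * p2 + b * q2"
    "t2 = c * (a * p2 + b * q2) - (p2 * x + q2 * y) * (a * a + b * b)"
    using assms by (auto simp: sweep_coords_def)
  show "(a * x + b * y - c) * (s1 * g2 - g1 * s2) = - (t1 * g2 - g1 * t2)"
    "s1 * g2 - g1 * s2 = (a * a + b * b) * (p1 * q2 - p2 * q1)"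
    unfolding coords by (simp_all add: algebra_simps)
qed

lemma sign_from_product:
  fixes e S T :: real
  assumes "e * S = - T" "S \<noteq> 0"
  shows "e \<le> 0 \<longleftrightarrow> 0 \<le> T * S"
proof -
  have "T = - (e * S)"
    using assms(1) by simp
  then have "T * S = - (e * (S * S))"
    by (simp add: algebra_simps)
  moreover have "S * S > 0"
    using assms(2) not_real_square_gt_zero by blast
  ultimately show ?thesis
    using mult_le_cancel_right_pos[of "S * S" e 0] by auto
qed

lemma pair_less_iff:
  fixes x1 y1 x2 y2 :: real
  shows "(x1, y1) < (x2, y2) \<longleftrightarrow> x1 \<le> x2 \<and> y1 \<le> y2 \<and> (x1 \<noteq> x2 \<or> y1 \<noteq> y2)"
  by (auto simp: less_prod_def less_eq_prod_def)

text \<open>The key of a line: for lines crossing the boundary, (minus) slope and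
  (minus) boundary height; a line parallel to the boundary and inside the
  halfplane gets a key below all others, one outside gets a key incomparable
  to all others (for \<open>M\<close> larger than all finite keys).\<close>

definition dominance_key :: "real \<Rightarrow> real \<times> real \<times> real \<Rightarrow> real \<times> real" where
  "dominance_key M = (\<lambda>(g, s, t).
     if g \<noteq> 0 then (s / g, t / g) else if 0 \<le> s * t then (- M, - M) else (M, - M))"

lemma pair_comparable_iff:
  fixes \<sigma>1 \<tau>1 \<sigma>2 \<tau>2 :: real
  assumes "\<sigma>1 \<noteq> \<sigma>2"
  shows "(\<sigma>1, \<tau>1) < (\<sigma>2, \<tau>2) \<or> (\<sigma>2, \<tau>2) < (\<sigma>1, \<tau>1) \<longleftrightarrow> 0 \<le> (\<tau>1 - \<tau>2) * (\<sigma>1 - \<sigma>2)"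
proof (cases "\<sigma>1 < \<sigma>2")
  case True
  then have "0 \<le> (\<tau>1 - \<tau>2) * (\<sigma>1 - \<sigma>2) \<longleftrightarrow> \<tau>1 \<le> \<tau>2"
    using mult_le_cancel_right_neg[of "\<sigma>1 - \<sigma>2" 0 "\<tau>1 - \<tau>2"] by simp
  then show ?thesis
    using True by (auto simp: pair_less_iff)
next
  case False
  then have "\<sigma>2 < \<sigma>1"
    using assms by simp
  then have "0 \<le> (\<tau>1 - \<tau>2) * (\<sigma>1 - \<sigma>2) \<longleftrightarrow> \<tau>2 \<le> \<tau>1"
    using mult_le_cancel_right_pos[of "\<sigma>1 - \<sigma>2" 0 "\<tau>1 - \<tau>2"] by simp
  then show ?thesis
    using \<open>\<sigma>2 < \<sigma>1\<close> by (auto simp: pair_less_iff)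
qed

text \<open>Two crossing lines meet inside the halfplane iff their keys are comparable.\<close>

lemma comparable_transversal:
  fixes g1 s1 t1 g2 s2 t2 :: real
  assumes "g1 \<noteq> 0" "g2 \<noteq> 0" "s1 * g2 - g1 * s2 \<noteq> 0"
  shows "0 \<le> (t1 * g2 - g1 * t2) * (s1 * g2 - g1 * s2) \<longleftrightarrow>
    (s1 / g1, t1 / g1) < (s2 / g2, t2 / g2) \<or> (s2 / g2, t2 / g2) < (s1 / g1, t1 / g1)"
proof -
  define \<sigma>1 \<tau>1 \<sigma>2 \<tau>2 where "\<sigma>1 = s1 / g1" "\<tau>1 = t1 / g1" "\<sigma>2 = s2 / g2" "\<tau>2 = t2 / g2"
  have scaled: "s1 = \<sigma>1 * g1" "t1 = \<tau>1 * g1" "s2 = \<sigma>2 * g2" "t2 = \<tau>2 * g2"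
    using assms(1,2) by (simp_all add: \<sigma>1_\<tau>1_\<sigma>2_\<tau>2_def)
  have diff_s: "s1 * g2 - g1 * s2 = (g1 * g2) * (\<sigma>1 - \<sigma>2)"
    and diff_t: "t1 * g2 - g1 * t2 = (g1 * g2) * (\<tau>1 - \<tau>2)"
    unfolding scaled by (simp_all add: algebra_simps)
  have prod: "(t1 * g2 - g1 * t2) * (s1 * g2 - g1 * s2) =
      ((g1 * g2) * (g1 * g2)) * ((\<tau>1 - \<tau>2) * (\<sigma>1 - \<sigma>2))"
    unfolding diff_s diff_t by (simp add: algebra_simps)
  have "\<sigma>1 \<noteq> \<sigma>2"
    using assms(3) diff_s by auto
  have "g1 * g2 \<noteq> 0"
    using assms(1,2) by simp
  then have "(g1 * g2) * (g1 * g2) > 0"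
    using not_real_square_gt_zero by blast
  then have "0 \<le> (t1 * g2 - g1 * t2) * (s1 * g2 - g1 * s2) \<longleftrightarrow> 0 \<le> (\<tau>1 - \<tau>2) * (\<sigma>1 - \<sigma>2)"
    unfolding prod using mult_le_cancel_left_pos[of "(g1 * g2) * (g1 * g2)" 0] by simp
  also have "\<dots> \<longleftrightarrow> (\<sigma>1, \<tau>1) < (\<sigma>2, \<tau>2) \<or> (\<sigma>2, \<tau>2) < (\<sigma>1, \<tau>1)"
    using pair_comparable_iff[OF \<open>\<sigma>1 \<noteq> \<sigma>2\<close>] by simp
  finally show ?thesis
    by (simp only: \<sigma>1_\<tau>1_\<sigma>2_\<tau>2_def)
qed

lemma comparable_parallel:
  fixes g1 s1 t1 s2 t2 M :: real
  assumes "g1 \<noteq> 0" "\<bar>s1 / g1\<bar> < M" "\<bar>t1 / g1\<bar> < M"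
  shows "0 \<le> (t1 * 0 - g1 * t2) * (s1 * 0 - g1 * s2) \<longleftrightarrow>
    (s1 / g1, t1 / g1) < dominance_key M (0, s2, t2) \<or> dominance_key M (0, s2, t2) < (s1 / g1, t1 / g1)"
proof -
  have prod: "(t1 * 0 - g1 * t2) * (s1 * 0 - g1 * s2) = (g1 * g1) * (s2 * t2)"
    by (simp add: algebra_simps)
  have "g1 * g1 > 0"
    using assms(1) not_real_square_gt_zero by blast
  then have sign: "0 \<le> (t1 * 0 - g1 * t2) * (s1 * 0 - g1 * s2) \<longleftrightarrow> 0 \<le> s2 * t2"
    unfolding prod using mult_le_cancel_left_pos[of "g1 * g1" 0] by simp
  have bounds: "- M < s1 / g1" "s1 / g1 < M" "- M < t1 / g1" "t1 / g1 < M"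
    using assms(2,3) by linarith+
  show ?thesis
  proof (cases "0 \<le> s2 * t2")
    case True
    then have "dominance_key M (0, s2, t2) < (s1 / g1, t1 / g1)"
      using bounds by (simp add: dominance_key_def pair_less_iff)
    then show ?thesis
      using sign True by blast
  next
    case False
    then have "\<not> (s1 / g1, t1 / g1) < dominance_key M (0, s2, t2)"
      "\<not> dominance_key M (0, s2, t2) < (s1 / g1, t1 / g1)"
      using bounds by (simp_all add: dominance_key_def pair_less_iff)
    then show ?thesis
      using sign False by blast
  qed
qed

lemma dominance_key_comparable:
  fixes g1 s1 t1 g2 s2 t2 M :: real
  assumes "s1 * g2 - g1 * s2 \<noteq> 0"
    and "g1 \<noteq> 0 \<Longrightarrow> \<bar>s1 / g1\<bar> < M \<and> \<bar>t1 / g1\<bar> < M"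
    and "g2 \<noteq> 0 \<Longrightarrow> \<bar>s2 / g2\<bar> < M \<and> \<bar>t2 / g2\<bar> < M"
  shows "0 \<le> (t1 * g2 - g1 * t2) * (s1 * g2 - g1 * s2) \<longleftrightarrow>
    dominance_key M (g1, s1, t1) < dominance_key M (g2, s2, t2) \<or>
    dominance_key M (g2, s2, t2) < dominance_key M (g1, s1, t1)"
proof (cases "g1 = 0")
  case True
  then have "g2 \<noteq> 0"
    using assms(1) by auto
  have "0 \<le> (t1 * g2 - g1 * t2) * (s1 * g2 - g1 * s2) \<longleftrightarrow>
      0 \<le> (t2 * 0 - g2 * t1) * (s2 * 0 - g2 * s1)"
    using True by (simp add: algebra_simps)
  also have "\<dots> \<longleftrightarrow> (s2 / g2, t2 / g2) < dominance_key M (g1, s1, t1) \<or>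
      dominance_key M (g1, s1, t1) < (s2 / g2, t2 / g2)"
    unfolding True by (rule comparable_parallel) (use \<open>g2 \<noteq> 0\<close> assms(3) in auto)
  also have "(s2 / g2, t2 / g2) = dominance_key M (g2, s2, t2)"
    using \<open>g2 \<noteq> 0\<close> by (simp add: dominance_key_def)
  finally show ?thesis
    by blast
next
  case False
  show ?thesis
  proof (cases "g2 = 0")
    case True
    have "0 \<le> (t1 * g2 - g1 * t2) * (s1 * g2 - g1 * s2) \<longleftrightarrow>
        (s1 / g1, t1 / g1) < dominance_key M (g2, s2, t2) \<or>
        dominance_key M (g2, s2, t2) < (s1 / g1, t1 / g1)"
      unfolding True by (rule comparable_parallel) (use \<open>g1 \<noteq> 0\<close> assms(2) in auto)
    also have "(s1 / g1, t1 / g1) = dominance_key M (g1, s1, t1)"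
      using \<open>g1 \<noteq> 0\<close> by (simp add: dominance_key_def)
    finally show ?thesis .
  next
    case False
    have "dominance_key M (g1, s1, t1) = (s1 / g1, t1 / g1)"
      "dominance_key M (g2, s2, t2) = (s2 / g2, t2 / g2)"
      using \<open>g1 \<noteq> 0\<close> False by (simp_all add: dominance_key_def)
    then show ?thesis
      using comparable_transversal[OF \<open>g1 \<noteq> 0\<close> False assms(1)] by simp
  qed
qed

lemma vertex_side_by_keys:
  fixes a b c p1 q1 r1 p2 q2 r2 x y M :: real
  defines "key1 \<equiv> dominance_key M (sweep_coords (a, b, c) (p1, q1, r1))"
    and "key2 \<equiv> dominance_key M (sweep_coords (a, b, c) (p2, q2, r2))"
  assumes "(a, b) \<noteq> (0, 0)" "p1 * q2 - p2 * q1 \<noteq> 0"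
    and "p1 * x + q1 * y = r1" "p2 * x + q2 * y = r2"
    and "norm (dominance_key 0 (sweep_coords (a, b, c) (p1, q1, r1))) < M"
    and "norm (dominance_key 0 (sweep_coords (a, b, c) (p2, q2, r2))) < M"
  shows "a * x + b * y \<le> c \<longleftrightarrow> key1 < key2 \<or> key2 < key1"
proof -
  obtain g1 s1 t1 g2 s2 t2 where sc: "sweep_coords (a, b, c) (p1, q1, r1) = (g1, s1, t1)"
    "sweep_coords (a, b, c) (p2, q2, r2) = (g2, s2, t2)"
    by (metis prod_cases3)
  have bound: "\<bar>s / g\<bar> < M \<and> \<bar>t / g\<bar> < M"
    if "norm (dominance_key 0 (g, s, t)) < M" "g \<noteq> 0" for g s t :: real
    using that norm_fst_le[of "s / g" "t / g"] norm_snd_le[of "t / g" "s / g"]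
    by (auto simp: dominance_key_def)
  have "a * a + b * b \<noteq> 0"
    using assms(3) by (auto simp: sum_squares_eq_zero_iff)
  then have nz: "s1 * g2 - g1 * s2 \<noteq> 0"
    using vertex_side_identity(2)[OF assms(5,6) sc] assms(4) by simp
  have "a * x + b * y \<le> c \<longleftrightarrow> a * x + b * y - c \<le> 0"
    by simp
  also have "\<dots> \<longleftrightarrow> 0 \<le> (t1 * g2 - g1 * t2) * (s1 * g2 - g1 * s2)"
    by (rule sign_from_product[OF vertex_side_identity(1)[OF assms(5,6) sc] nz])
  also have "\<dots> \<longleftrightarrow> key1 < key2 \<or> key2 < key1"
    unfolding key1_def key2_def sc
    by (rule dominance_key_comparable[OF nz]) (use bound assms(7,8) sc in auto)
  finally show ?thesis .
qed

lemma halfplane_dominance_key: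
  assumes "finite A" "\<forall>L\<in>A. is_line L" "is_closed_halfplane H"
  obtains \<kappa> :: "(real \<times> real) set \<Rightarrow> real \<times> real"
  where "\<And>L1 L2 P. L1 \<in> A \<Longrightarrow> L2 \<in> A \<Longrightarrow> L1 \<noteq> L2 \<Longrightarrow> P \<in> L1 \<Longrightarrow> P \<in> L2 \<Longrightarrow>
           P \<in> H \<longleftrightarrow> \<kappa> L1 < \<kappa> L2 \<or> \<kappa> L2 < \<kappa> L1"
proof -
  obtain a b c where ab: "(a, b) \<noteq> (0, 0)" and H: "H = {(x, y). a * x + b * y \<le> c}"
    using assms(3) unfolding is_closed_halfplane_def by blast
  obtain w r where wr: "\<And>L. L \<in> A \<Longrightarrow> w L \<noteq> 0 \<and> L = {z. inner (w L) z = r L}"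
    using assms(2) unfolding is_line_hyperplane by metis
  define co where "co L = sweep_coords (a, b, c) (fst (w L), snd (w L), r L)" for L
  define M where "M = 1 + (\<Sum>L\<in>A. norm (dominance_key 0 (co L)))"
  have bound: "norm (dominance_key 0 (co L)) < M" if "L \<in> A" for L
    using member_le_sum[OF that, of "\<lambda>L. norm (dominance_key 0 (co L))"] assms(1)
    unfolding M_def by simp
  show ?thesis
  proof (rule that[of "\<lambda>L. dominance_key M (co L)"])
    fix L1 L2 P
    assume L: "L1 \<in> A" "L2 \<in> A" "L1 \<noteq> L2" "P \<in> L1" "P \<in> L2"
    obtain p1 q1 p2 q2 where w: "w L1 = (p1, q1)" "w L2 = (p2, q2)"
      by fastforce
    obtain x y where P: "P = (x, y)"
      by fastforce
    have lines: "L1 = {z. inner (p1, q1) z = r L1}" "L2 = {z. inner (p2, q2) z = r L2}"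
      "(p1, q1) \<noteq> 0" "(p2, q2) \<noteq> 0"
      using wr[OF L(1)] wr[OF L(2)] w by auto
    have "inner (p1, q1) P = r L1" "inner (p2, q2) P = r L2"
      using L(4,5) lines(1,2) by (metis mem_Collect_eq)+
    then have on: "p1 * x + q1 * y = r L1" "p2 * x + q2 * y = r L2"
      using P by simp_all
    have "P \<in> H \<longleftrightarrow> a * x + b * y \<le> c"
      using H P by auto
    also have "\<dots> \<longleftrightarrow> dominance_key M (co L1) < dominance_key M (co L2) \<or>
        dominance_key M (co L2) < dominance_key M (co L1)"
      using vertex_side_by_keys[OF ab meeting_lines_det[OF lines(3,4,1,2) L(3-5)] on]
        bound[OF L(1)] bound[OF L(2)] w unfolding co_def by simp
    finally show "P \<in> H \<longleftrightarrow> dominance_key M (co L1) < dominance_key M (co L2) \<or>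
        dominance_key M (co L2) < dominance_key M (co L1)" .
  qed
qed

definition chain_wrt :: "('a \<Rightarrow> 'b::order) \<Rightarrow> 'a set \<Rightarrow> bool" where
  "chain_wrt k C \<longleftrightarrow> (\<forall>x\<in>C. \<forall>y\<in>C. x \<noteq> y \<longrightarrow> k x < k y \<or> k y < k x)"

definition antichain_wrt :: "('a \<Rightarrow> 'b::order) \<Rightarrow> 'a set \<Rightarrow> bool" where
  "antichain_wrt k S \<longleftrightarrow> (\<forall>x\<in>S. \<forall>y\<in>S. \<not> k x < k y)"

definition chains_topped_at :: "('a \<Rightarrow> 'b::order) \<Rightarrow> 'a set \<Rightarrow> 'a \<Rightarrow> 'a set set" where
  "chains_topped_at k B x = {C. C \<subseteq> B \<and> chain_wrt k C \<and> x \<in> C \<and> (\<forall>y\<in>C. y \<noteq> x \<longrightarrow> k y < k x)}"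

definition chain_height :: "('a \<Rightarrow> 'b::order) \<Rightarrow> 'a set \<Rightarrow> 'a \<Rightarrow> nat" where
  "chain_height k B x = Max (card ` chains_topped_at k B x)"

lemma finite_chains_topped_at:
  assumes "finite B"
  shows "finite (chains_topped_at k B x)"
proof (rule finite_subset)
  show "chains_topped_at k B x \<subseteq> Pow B"
    by (auto simp: chains_topped_at_def)
qed (use assms in simp)

lemma chain_height_attained:
  assumes "finite B" "x \<in> B"
  obtains C where "C \<in> chains_topped_at k B x" "card C = chain_height k B x"
proof -
  have "{x} \<in> chains_topped_at k B x"
    using assms(2) by (simp add: chains_topped_at_def chain_wrt_def)
  then have "Max (card ` chains_topped_at k B x) \<in> card ` chains_topped_at k B x"
    using finite_chains_topped_at[OF assms(1)] by (intro Max_in) auto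
  then obtain C where C: "C \<in> chains_topped_at k B x" "card C = Max (card ` chains_topped_at k B x)"
    by (metis imageE)
  show ?thesis
    using that[OF C(1)] C(2) by (simp add: chain_height_def)
qed

lemma chain_height_bounds:
  assumes "finite B" "x \<in> B" "\<And>C. C \<subseteq> B \<Longrightarrow> chain_wrt k C \<Longrightarrow> card C \<le> m"
  shows "1 \<le> chain_height k B x" "chain_height k B x \<le> m"
proof -
  obtain C where C: "C \<in> chains_topped_at k B x" "card C = chain_height k B x"
    using chain_height_attained[OF assms(1,2)] by blast
  then have CB: "C \<subseteq> B" and "chain_wrt k C" "x \<in> C"
    by (auto simp: chains_topped_at_def)
  have "finite C"
    using CB assms(1) by (rule finite_subset)
  moreover have "C \<noteq> {}"
    using \<open>x \<in> C\<close> by blast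
  ultimately have "1 \<le> card C"
    by (simp add: Suc_le_eq card_gt_0_iff)
  moreover have "card C \<le> m"
    using assms(3) CB \<open>chain_wrt k C\<close> by blast
  ultimately show "1 \<le> chain_height k B x" "chain_height k B x \<le> m"
    using C(2) by simp_all
qed

lemma chain_height_strict_mono:
  assumes "finite B" "x \<in> B" "y \<in> B" "k x < k y"
  shows "chain_height k B x < chain_height k B y"
proof -
  obtain C where C: "C \<in> chains_topped_at k B x" "card C = chain_height k B x"
    using chain_height_attained[OF assms(1,2)] by blast
  then have CB: "C \<subseteq> B" and chain: "chain_wrt k C"
    and top: "\<forall>z\<in>C. z \<noteq> x \<longrightarrow> k z < k x"
    by (auto simp: chains_topped_at_def)
  have below_y: "k z < k y" if "z \<in> C" for z
  proof (cases "z = x")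
    case False
    then have "k z < k x"
      using top that by blast
    then show ?thesis
      using assms(4) by (rule less_trans)
  qed (use assms(4) in simp)
  then have "y \<notin> C"
    by blast
  have "chain_wrt k (insert y C)"
    using chain below_y unfolding chain_wrt_def by auto
  then have "insert y C \<in> chains_topped_at k B y"
    using CB below_y assms(3) by (auto simp: chains_topped_at_def)
  then have "card (insert y C) \<le> chain_height k B y"
    unfolding chain_height_def using finite_chains_topped_at[OF assms(1)] by (intro Max_ge) auto
  moreover have "card (insert y C) = chain_height k B x + 1"
    using \<open>y \<notin> C\<close> C(2) finite_subset[OF CB assms(1)] by simp
  ultimately show ?thesis
    by simp
qed

lemma sum_le_card_times_some_term:
  fixes f :: "'i \<Rightarrow> nat"
  assumes "finite I" "I \<noteq> {}"
  obtains i where "i \<in> I" "(\<Sum>j\<in>I. f j) \<le> card I * f i"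
proof -
  have "Max (f ` I) \<in> f ` I"
    using assms by (intro Max_in) auto
  then obtain i where i: "i \<in> I" "f i = Max (f ` I)"
    by auto
  then have "\<forall>j\<in>I. f j \<le> f i"
    using assms(1) by simp
  then have "(\<Sum>j\<in>I. f j) \<le> card I * f i"
    using sum_bounded_above[of I f "f i"] by simp
  then show ?thesis
    using that i(1) by blast
qed

text \<open>Mirsky's theorem: if all chains have at most \<open>m\<close> elements, the set splits
  into \<open>m\<close> antichains (the height levels), so some antichain has \<open>|B| / m\<close> elements.\<close>

theorem mirsky:
  fixes k :: "'a \<Rightarrow> 'b::order"
  assumes "finite B" "\<And>C. C \<subseteq> B \<Longrightarrow> chain_wrt k C \<Longrightarrow> card C \<le> m"
  shows "\<exists>S\<subseteq>B. antichain_wrt k S \<and> card B \<le> m * card S"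
proof (cases "B = {}")
  case True
  then show ?thesis
    by (auto simp: antichain_wrt_def)
next
  case False
  define level where "level j = {x\<in>B. chain_height k B x = j}" for j
  have antichain: "antichain_wrt k (level j)" for j
    unfolding antichain_wrt_def
  proof (intro ballI notI)
    fix x y
    assume "x \<in> level j" "y \<in> level j" "k x < k y"
    then show False
      using chain_height_strict_mono[OF assms(1), of x y k] by (simp add: level_def)
  qed
  have level_of: "chain_height k B x \<in> {1..m}" "x \<in> level (chain_height k B x)" if "x \<in> B" for x
    using chain_height_bounds[OF assms(1) that assms(2)] that by (auto simp: level_def)
  then have "B = (\<Union>j\<in>{1..m}. level j)"
    by (auto simp: level_def)
  then have "card B \<le> (\<Sum>j\<in>{1..m}. card (level j))"
    using card_UN_le[of "{1..m}" level] by simp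
  moreover have "{1..m} \<noteq> {}"
    using False level_of by blast
  then obtain j where "(\<Sum>j\<in>{1..m}. card (level j)) \<le> m * card (level j)"
    using sum_le_card_times_some_term[of "{1..m}" "\<lambda>j. card (level j)"] by auto
  ultimately show ?thesis
    using antichain by (intro exI[of _ "level j"]) (auto simp: level_def)
qed

corollary large_chain_or_antichain:
  fixes k :: "'a \<Rightarrow> 'b::order" and l :: real
  assumes "finite B" "l * l \<le> real (card B)"
  shows "\<exists>C\<subseteq>B. (chain_wrt k C \<or> antichain_wrt k C) \<and> l \<le> real (card C)"
proof (rule ccontr)
  assume "\<not> ?thesis"
  then have small: "real (card C) < l" if "C \<subseteq> B" "chain_wrt k C \<or> antichain_wrt k C" for C
    using that by (meson not_le)
  define chain_sizes where "chain_sizes = card ` {C. C \<subseteq> B \<and> chain_wrt k C}"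
  define m where "m = Max chain_sizes"
  have "finite chain_sizes"
    unfolding chain_sizes_def using assms(1) by (auto intro: finite_subset[of _ "Pow B"])
  have "0 \<in> chain_sizes"
    unfolding chain_sizes_def by (force simp: chain_wrt_def)
  then have "m \<in> chain_sizes"
    unfolding m_def using \<open>finite chain_sizes\<close> by (intro Max_in) auto
  then obtain C where C: "C \<subseteq> B" "chain_wrt k C" "card C = m"
    unfolding chain_sizes_def by blast
  have "real m < l"
    using small C by blast
  have "0 < l"
    using small[of "{}"] by (simp add: chain_wrt_def)
  have "card D \<le> m" if "D \<subseteq> B" "chain_wrt k D" for D
    unfolding m_def by (rule Max_ge[OF \<open>finite chain_sizes\<close>]) (use that in \<open>simp add: chain_sizes_def\<close>)
  then obtain S where S: "S \<subseteq> B" "antichain_wrt k S" "card B \<le> m * card S"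
    using mirsky[OF assms(1)] by blast
  have "real (card S) < l"
    using small S by blast
  have "l * l \<le> real m * real (card S)"
    using assms(2) S(3) by (metis of_nat_le_iff of_nat_mult order_trans)
  also have "\<dots> \<le> real m * l"
    using \<open>real (card S) < l\<close> by (simp add: mult_left_mono)
  also have "\<dots> < l * l"
    using \<open>real m < l\<close> \<open>0 < l\<close> by (simp add: mult_strict_right_mono)
  finally show False
    by simp
qed

lemma between_in_convex:
  assumes "convex C" "a \<in> C" "b \<in> C" "between (a, b) x"
  shows "x \<in> C"
proof -
  have "closed_segment a b \<subseteq> C"
    using assms(1-3) convex_contains_segment by blast
  then show ?thesis
    using assms(4) between_mem_segment by blast
qed

text \<open>Otherwise three witnesses, each missed by a different pair, would be
  collinear, and the middle one would be missed by all three halfplanes.\<close>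

lemma line_trace_in_two_of_three:
  assumes "is_line L" "is_closed_halfplane H1" "is_closed_halfplane H2" "is_closed_halfplane H3"
    and "S \<subseteq> L" "S \<subseteq> H1 \<union> H2 \<union> H3"
  shows "S \<subseteq> H1 \<union> H2 \<or> S \<subseteq> H1 \<union> H3 \<or> S \<subseteq> H2 \<union> H3"
proof (rule ccontr)
  assume "\<not> ?thesis"
  then obtain X Y Z where X: "X \<in> S" "X \<in> - H1" "X \<in> - H2"
    and Y: "Y \<in> S" "Y \<in> - H1" "Y \<in> - H3"
    and Z: "Z \<in> S" "Z \<in> - H2" "Z \<in> - H3"
    by blast
  have "collinear {X, Y, Z}"
    by (rule collinear_on_line[OF assms(1)]) (use assms(5) X(1) Y(1) Z(1) in blast)
  then consider "between (Y, Z) X" | "between (Z, X) Y" | "between (X, Y) Z"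
    by (auto simp: collinear_between_cases)
  then show False
  proof cases
    case 1
    then have "X \<in> - H3"
      using between_in_convex[OF convex_halfplane_complement[OF assms(4)]] Y Z by blast
    then show False
      using X assms(6) by blast
  next
    case 2
    then have "Y \<in> - H2"
      using between_in_convex[OF convex_halfplane_complement[OF assms(3)]] Z X by blast
    then show False
      using Y assms(6) by blast
  next
    case 3
    then have "Z \<in> - H1"
      using between_in_convex[OF convex_halfplane_complement[OF assms(2)]] X Y by blast
    then show False
      using Z assms(6) by blast
  qed
qed

text \<open>If the vertices of an arrangement lying on its lines are covered by \<open>H1 \<union> H2\<close>
  with \<open>H2\<close> a halfplane, a chain of keys gives a subarrangement with all vertices
  in \<open>H2\<close> and an antichain one with all vertices in \<open>H1\<close>.\<close>

lemma large_subarrangement_in_halfplane_pair: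
  assumes "finite B" "\<forall>L\<in>B. is_line L" "is_closed_halfplane H2"
    and "\<forall>L\<in>B. vertices B \<inter> L \<subseteq> H1 \<union> H2" "l * l \<le> real (card B)"
  shows "\<exists>A'\<subseteq>B. l \<le> real (card A') \<and> (vertices A' \<subseteq> H1 \<or> vertices A' \<subseteq> H2)"
proof -
  obtain \<kappa> :: "(real \<times> real) set \<Rightarrow> real \<times> real" where \<kappa>:
    "\<And>L1 L2 P. L1 \<in> B \<Longrightarrow> L2 \<in> B \<Longrightarrow> L1 \<noteq> L2 \<Longrightarrow> P \<in> L1 \<Longrightarrow> P \<in> L2 \<Longrightarrow>
       P \<in> H2 \<longleftrightarrow> \<kappa> L1 < \<kappa> L2 \<or> \<kappa> L2 < \<kappa> L1"
    using halfplane_dominance_key[OF assms(1-3)] by metis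
  obtain C where C: "C \<subseteq> B" "chain_wrt \<kappa> C \<or> antichain_wrt \<kappa> C" "l \<le> real (card C)"
    using large_chain_or_antichain[OF assms(1,5), where k = \<kappa>] by blast
  have "vertices C \<subseteq> H1 \<or> vertices C \<subseteq> H2"
    using C(2)
  proof
    assume chain: "chain_wrt \<kappa> C"
    have "P \<in> H2" if P: "P \<in> vertices C" for P
    proof -
      obtain L1 L2 where L: "L1 \<in> C" "L2 \<in> C" "L1 \<noteq> L2" "P \<in> L1" "P \<in> L2"
        using P unfolding vertices_def by blast
      then have "\<kappa> L1 < \<kappa> L2 \<or> \<kappa> L2 < \<kappa> L1"
        using chain unfolding chain_wrt_def by blast
      then show ?thesis
        using \<kappa>[of L1 L2 P] L C(1) by blast
    qed
    then show ?thesis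
      by blast
  next
    assume antichain: "antichain_wrt \<kappa> C"
    have "P \<in> H1" if P: "P \<in> vertices C" for P
    proof -
      obtain L1 L2 where L: "L1 \<in> C" "L2 \<in> C" "L1 \<noteq> L2" "P \<in> L1" "P \<in> L2"
        using P unfolding vertices_def by blast
      then have "\<not> \<kappa> L1 < \<kappa> L2" "\<not> \<kappa> L2 < \<kappa> L1"
        using antichain unfolding antichain_wrt_def by blast+
      then have "P \<notin> H2"
        using \<kappa>[of L1 L2 P] L C(1) by blast
      moreover have "P \<in> vertices B \<inter> L1"
        using P vertices_mono[OF C(1)] L(4) by blast
      ultimately show ?thesis
        using assms(4) L(1) C(1) by blast
    qed
    then show ?thesis
      by blast
  qed
  then show ?thesis
    using C(1,3) by blast
qed

definition rich :: "(real \<times> real) set set \<Rightarrow> (real \<times> real) set \<Rightarrow> bool" where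
  "rich A H \<longleftrightarrow> (\<exists>A'. A' \<subseteq> A \<and> real (card A') \<ge> sqrt (real (card A) / 3) \<and> vertices A' \<subseteq> H)"

lemma rich_of_third_of_lines:
  assumes "finite A" "\<forall>L\<in>A. is_line L" "is_closed_halfplane H'"
    and "B \<subseteq> A" "real (card A) / 3 \<le> real (card B)" "\<forall>L\<in>B. vertices A \<inter> L \<subseteq> H \<union> H'"
  shows "rich A H \<or> rich A H'"
proof -
  define l where "l = sqrt (real (card A) / 3)"
  have "finite B"
    using assms(4,1) by (rule finite_subset)
  moreover have "\<forall>L\<in>B. is_line L"
    using assms(2,4) by blast
  moreover have "\<forall>L\<in>B. vertices B \<inter> L \<subseteq> H \<union> H'"
    using assms(6) vertices_mono[OF assms(4)] by blast
  moreover have "l * l \<le> real (card B)"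
    using assms(5) by (simp add: l_def)
  ultimately obtain A' where A': "A' \<subseteq> B" "l \<le> real (card A')"
    "vertices A' \<subseteq> H \<or> vertices A' \<subseteq> H'"
    using large_subarrangement_in_halfplane_pair[OF _ _ assms(3)] by metis
  have "A' \<subseteq> A" "sqrt (real (card A) / 3) \<le> real (card A')"
    using A'(1,2) assms(4) by (auto simp: l_def)
  then show ?thesis
    using A'(3) unfolding rich_def by blast
qed

text \<open>If three halfplanes cover all vertices, one of them is rich: each line has
  its vertices covered by two of the halfplanes, and one of the three pairs
  serves at least a third of the lines.\<close>

lemma rich_of_three_covering_halfplanes:
  assumes "finite A" "\<forall>L\<in>A. is_line L"
    and "is_closed_halfplane H1" "is_closed_halfplane H2" "is_closed_halfplane H3"
    and "vertices A \<subseteq> H1 \<union> H2 \<union> H3"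
  shows "rich A H1 \<or> rich A H2 \<or> rich A H3"
proof -
  define B12 B13 B23 where
    "B12 = {L\<in>A. vertices A \<inter> L \<subseteq> H1 \<union> H2}"
    "B13 = {L\<in>A. vertices A \<inter> L \<subseteq> H1 \<union> H3}"
    "B23 = {L\<in>A. vertices A \<inter> L \<subseteq> H2 \<union> H3}"
  have "A \<subseteq> B12 \<union> (B13 \<union> B23)"
  proof
    fix L
    assume "L \<in> A"
    moreover have "vertices A \<inter> L \<subseteq> H1 \<union> H2 \<union> H3"
      using assms(6) by blast
    ultimately have "vertices A \<inter> L \<subseteq> H1 \<union> H2 \<or> vertices A \<inter> L \<subseteq> H1 \<union> H3 \<or>
        vertices A \<inter> L \<subseteq> H2 \<union> H3"
      using assms(2) line_trace_in_two_of_three[OF _ assms(3-5) Int_lower2] by blast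
    then show "L \<in> B12 \<union> (B13 \<union> B23)"
      using \<open>L \<in> A\<close> unfolding B12_B13_B23_def by blast
  qed
  moreover have "finite (B12 \<union> (B13 \<union> B23))"
    using assms(1) unfolding B12_B13_B23_def by simp
  ultimately have "card A \<le> card (B12 \<union> (B13 \<union> B23))"
    by (simp add: card_mono)
  also have "\<dots> \<le> card B12 + (card B13 + card B23)"
    using card_Un_le[of B12 "B13 \<union> B23"] card_Un_le[of B13 B23] by linarith
  finally have "real (card A) \<le> real (card B12) + real (card B13) + real (card B23)"
    by simp
  then consider "real (card A) / 3 \<le> real (card B12)" | "real (card A) / 3 \<le> real (card B13)"
    | "real (card A) / 3 \<le> real (card B23)"
    by linarith
  then show ?thesis
  proof cases
    case 1
    have "rich A H1 \<or> rich A H2"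
      by (rule rich_of_third_of_lines[OF assms(1,2,4) _ 1]) (auto simp: B12_B13_B23_def)
    then show ?thesis
      by blast
  next
    case 2
    have "rich A H1 \<or> rich A H3"
      by (rule rich_of_third_of_lines[OF assms(1,2,5) _ 2]) (auto simp: B12_B13_B23_def)
    then show ?thesis
      by blast
  next
    case 3
    have "rich A H2 \<or> rich A H3"
      by (rule rich_of_third_of_lines[OF assms(1,2,5) _ 3]) (auto simp: B12_B13_B23_def)
    then show ?thesis
      by blast
  qed
qed

text \<open>Helly's theorem in the plane, including families with fewer than three members.\<close>

lemma helly_plane:
  fixes \<F> :: "(real \<times> real) set set"
  assumes "finite \<F>" "\<forall>C\<in>\<F>. convex C"
    and "\<And>C1 C2 C3. C1 \<in> \<F> \<Longrightarrow> C2 \<in> \<F> \<Longrightarrow> C3 \<in> \<F> \<Longrightarrow> C1 \<inter> C2 \<inter> C3 \<noteq> {}"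
  shows "\<Inter>\<F> \<noteq> {}"
proof (cases "3 \<le> card \<F>")
  case True
  show ?thesis
  proof (rule Helly)
    fix t
    assume t: "t \<subseteq> \<F>" "card t = DIM(real \<times> real) + 1"
    then have "card t = 3"
      by simp
    then obtain C1 C2 C3 where "t = {C1, C2, C3}"
      by (auto simp: card_3_iff)
    moreover have "C1 \<in> \<F>" "C2 \<in> \<F>" "C3 \<in> \<F>"
      using t(1) calculation by auto
    ultimately show "\<Inter>t \<noteq> {}"
      using assms(3)[of C1 C2 C3] by auto
  qed (use True assms(2) in auto)
next
  case False
  show ?thesis
  proof (cases "\<F> = {}")
    case False
    then obtain C1 where "C1 \<in> \<F>"
      by blast
    have "\<exists>C2\<in>\<F>. \<F> = {C1, C2}"
    proof (cases "\<F> = {C1}")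
      case False
      then obtain C2 where "C2 \<in> \<F>" "C2 \<noteq> C1"
        using \<open>C1 \<in> \<F>\<close> by blast
      then have "{C1, C2} = \<F>"
        using \<open>C1 \<in> \<F>\<close> \<open>\<not> 3 \<le> card \<F>\<close> assms(1) by (intro card_seteq) auto
      then show ?thesis
        using \<open>C2 \<in> \<F>\<close> by blast
    qed (use \<open>C1 \<in> \<F>\<close> in auto)
    then obtain C2 where "C2 \<in> \<F>" "\<F> = {C1, C2}"
      by blast
    then show ?thesis
      using assms(3)[of C1 C2 C2] \<open>C1 \<in> \<F>\<close> by auto
  qed simp
qed

text \<open>The convex hulls of the vertices outside the non-rich halfplanes have a
  common point: by the covering lemma any three of them share a vertex.\<close>

lemma non_rich_hulls_intersect:
  assumes "finite A" "\<forall>L\<in>A. is_line L"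
  shows "\<Inter>{convex hull (vertices A - H) | H. is_closed_halfplane H \<and> \<not> rich A H} \<noteq> {}"
    (is "\<Inter>?\<F> \<noteq> {}")
proof (rule helly_plane)
  have "?\<F> \<subseteq> (\<lambda>T. convex hull T) ` Pow (vertices A)"
  proof
    fix C
    assume "C \<in> ?\<F>"
    then obtain H where "C = convex hull (vertices A - H)"
      by blast
    then show "C \<in> (\<lambda>T. convex hull T) ` Pow (vertices A)"
      by blast
  qed
  moreover have "finite ((\<lambda>T. convex hull T) ` Pow (vertices A))"
    using finite_vertices[OF assms] by (intro finite_imageI) simp
  ultimately show "finite ?\<F>"
    by (rule finite_subset)
  show "\<forall>C\<in>?\<F>. convex C"
    by (auto simp: convex_convex_hull)
next
  fix C1 C2 C3
  assume "C1 \<in> ?\<F>" "C2 \<in> ?\<F>" "C3 \<in> ?\<F>"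
  then obtain H1 H2 H3 where H: "C1 = convex hull (vertices A - H1)"
    "C2 = convex hull (vertices A - H2)" "C3 = convex hull (vertices A - H3)"
    "is_closed_halfplane H1" "is_closed_halfplane H2" "is_closed_halfplane H3"
    "\<not> rich A H1" "\<not> rich A H2" "\<not> rich A H3"
    by blast
  then have "\<not> vertices A \<subseteq> H1 \<union> H2 \<union> H3"
    using rich_of_three_covering_halfplanes[OF assms H(4-6)] by blast
  then obtain v where "v \<in> vertices A - H1" "v \<in> vertices A - H2" "v \<in> vertices A - H3"
    by blast
  moreover have "vertices A - H1 \<subseteq> C1" "vertices A - H2 \<subseteq> C2" "vertices A - H3 \<subseteq> C3"
    unfolding H(1-3) by (rule hull_subset)+
  ultimately show "C1 \<inter> C2 \<inter> C3 \<noteq> {}"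
    by blast
qed

lemma convex_hull_outside_halfplane:
  assumes "is_closed_halfplane H"
  shows "convex hull (S - H) \<inter> H = {}"
proof -
  have "convex hull (S - H) \<subseteq> - H"
    using convex_halfplane_complement[OF assms] by (intro hull_minimal) auto
  then show ?thesis
    by blast
qed

theorem mainTheorem5:
  fixes A :: "(real \<times> real) set set"
  assumes "finite A" and "\<forall>L\<in>A. is_line L"
  shows "\<exists>q. \<forall>H. is_closed_halfplane H \<and> q \<in> H \<longrightarrow>
           (\<exists>A'. A' \<subseteq> A \<and> real (card A') \<ge> sqrt (real (card A) / 3) \<and> vertices A' \<subseteq> H)"
proof -
  obtain q where q: "q \<in> \<Inter>{convex hull (vertices A - H) | H. is_closed_halfplane H \<and> \<not> rich A H}"
    using non_rich_hulls_intersect[OF assms] by blast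
  have "rich A H" if H: "is_closed_halfplane H" "q \<in> H" for H
  proof (rule ccontr)
    assume "\<not> rich A H"
    then have "q \<in> convex hull (vertices A - H)"
      using q H(1) by blast
    then show False
      using convex_hull_outside_halfplane[OF H(1)] H(2) by blast
  qed
  then show ?thesis
    unfolding rich_def by blast
qed

end
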